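(* Let $k$ be a positive integer and $p=t=\frac{k+1}{k+2}$. If $k>1$, bold play is optimal, i.e. $\pi(p,p)=p$. If $k=1$ (so $p=t=\frac23$), the stake sequence $c_1=c_2=c_3=\frac13$, $c_i=0$ for $i\ge4$, is optimal, i.e. $\pi(\frac23,\frac23)=\mathbf P(c_1\beta_1+c_2\beta_2+c_3\beta_3\ge\frac23)$ for these $c_i$.
   Context: Let $\beta_1,\beta_2,\ldots$ be independent Bernoulli random variables with success probability $p$. A stake sequence is a sequence $\gamma=(c_1,c_2,\ldots)$ of non-negative reals with $c_1\ge c_2\ge\cdots$ and $\sum_i c_i=1$; write $S_\gamma=\sum_i c_i\beta_i$. For $0\le p\le t\le 1$ define $\pi(p,t)=\sup\{\mathbf P(S_\gamma\ge t)\mid \gamma \text{ a stake sequence}\}$. Bold play for threshold $t$ is the stake sequence with $c_i=\frac1m$ for $i\le m$ and $c_i=0$ for $i>m$, where $m=\lfloor 1/t\rfloor$; it is optimal if it attains $\pi(p,t)$. For $t>\frac12$ bold play is $c_1=1$, with success probability $p$. *)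

theory Defs
  imports "HOL-Probability.Probability"
begin

text \<open>Indices are shifted: the paper's c_1, c_2, ... are c 0, c 1, ...\<close>

definition stake_seq :: "(nat \<Rightarrow> real) \<Rightarrow> bool" where
  "stake_seq c \<longleftrightarrow> (\<forall>i. 0 \<le> c i) \<and> (\<forall>i. c (Suc i) \<le> c i) \<and> c sums 1"

definition bern_space :: "real \<Rightarrow> (nat \<Rightarrow> bool) measure" where
  "bern_space p = PiM UNIV (\<lambda>_::nat. measure_pmf (bernoulli_pmf p))"

definition stake_sum :: "(nat \<Rightarrow> real) \<Rightarrow> (nat \<Rightarrow> bool) \<Rightarrow> real" where
  "stake_sum c \<omega> = (\<Sum>i. c i * of_bool (\<omega> i))"

definition success_prob :: "real \<Rightarrow> (nat \<Rightarrow> real) \<Rightarrow> real \<Rightarrow> real" where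
  "success_prob p c t =
     measure (bern_space p) {\<omega> \<in> space (bern_space p). stake_sum c \<omega> \<ge> t}"

definition pi_val :: "real \<Rightarrow> real \<Rightarrow> real" where
  "pi_val p t = Sup {success_prob p c t | c. stake_seq c}"

definition bold_play :: "real \<Rightarrow> nat \<Rightarrow> real" where
  "bold_play t = (let m = nat \<lfloor>1 / t\<rfloor> in (\<lambda>i. if i < m then 1 / real m else 0))"

end

theory Submission
  imports Defs
begin

text \<open>Write \<open>p = 1 - 1/m\<close> with \<open>m = k + 2\<close>. Colour the indices independently and
  uniformly with \<open>m\<close> colours. For each fixed colour \<open>j\<close> the events "index \<open>i\<close> is not
  coloured \<open>j\<close>" are i.i.d. with probability \<open>p\<close>, and the stake sum is at least \<open>p\<close>
  exactly when colour \<open>j\<close> carries stake mass at most \<open>1/m\<close>. Hence \<open>m\<close> times the success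
  probability is the expected number of such light colours. The masses add up to 1, so
  at most \<open>m - 1\<close> colours are light unless all masses equal \<open>1/m\<close>. Averaging over the
  colours of the two largest stakes, at most two of the \<open>m\<^sup>2\<close> placements make all masses
  equal, and for \<open>m \<ge> 4\<close> they are compensated by two placements with two heavy colours.
  So the success probability is at most \<open>p\<close>, which bold play attains; for \<open>m = 3\<close> the
  count only gives \<open>20/27\<close>, which three stakes of \<open>1/3\<close> attain.\<close>

section \<open>Counting light colours\<close>

definition light_count :: "nat \<Rightarrow> (nat \<Rightarrow> real) \<Rightarrow> nat" where
  "light_count m w = card {j. j < m \<and> w j \<le> 1 / real m}"

lemma light_count_le: "light_count m w \<le> m"
proof -
  have "light_count m w \<le> card {..<m}"
    unfolding light_count_def by (rule card_mono) auto
  then show ?thesis by simp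
qed

lemma light_count_eq_sum: "real (light_count m w) = (\<Sum>j<m. of_bool (w j \<le> 1 / real m))"
  by (simp add: light_count_def Int_def)

lemma light_count_less:
  assumes "(\<Sum>j<m. w j) = 1" and "j < m" and "w j \<noteq> 1 / real m"
  shows "light_count m w < m"
proof (rule ccontr)
  assume "\<not> light_count m w < m"
  then have "{j. j < m \<and> w j \<le> 1 / real m} = {..<m}"
    using light_count_le[of m w] unfolding light_count_def by (intro card_subset_eq) auto
  then have light: "\<forall>i<m. w i \<le> 1 / real m" by auto
  have "(\<Sum>i<m. 1 / real m - w i) = 0"
    using assms(1,2) by (simp add: sum_subtractf)
  then have "\<forall>i\<in>{..<m}. 1 / real m - w i = 0"
    by (subst sum_nonneg_eq_0_iff[symmetric]) (use light in auto)
  with assms(2,3) show False by auto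
qed

definition add_stakes :: "(nat \<Rightarrow> real) \<Rightarrow> real \<Rightarrow> real \<Rightarrow> nat \<Rightarrow> nat \<Rightarrow> nat \<Rightarrow> real" where
  "add_stakes L x y a b j = L j + (if a = j then x else 0) + (if b = j then y else 0)"

lemma sum_add_stakes:
  assumes "a < m" "b < m"
  shows "(\<Sum>j<m. add_stakes L x y a b j) = (\<Sum>j<m. L j) + x + y"
  using assms by (simp add: add_stakes_def sum.distrib)

lemma add_stakes_eq_imp_swap:
  assumes "x > 0" "y > 0" "a < m" "b < m" "i < m" "j < m"
    and "\<forall>l<m. add_stakes L x y a b l = add_stakes L x y i j l"
  shows "(a, b) = (i, j) \<or> (a, b) = (j, i)"
proof -
  have "\<forall>l\<in>{a, b, i, j}. (if a = l then x else 0) + (if b = l then y else 0)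
      = (if i = l then x else 0) + (if j = l then y else 0)"
    using assms(3-7) by (auto simp: add_stakes_def)
  with assms(1,2) show ?thesis
    by (smt (verit) insert_iff prod.inject)
qed

lemma exists_less_notin:
  assumes "finite B" and "card B < n"
  shows "\<exists>a<n. a \<notin> B"
proof (rule ccontr)
  assume "\<not> (\<exists>a<n. a \<notin> B)"
  then have "{..<n} \<subseteq> B" by auto
  from card_mono[OF assms(1) this] have "n \<le> card B" by simp
  with assms(2) show False by simp
qed

context
  fixes m :: nat and L :: "nat \<Rightarrow> real" and x y :: real
  assumes m3: "m \<ge> 3" and L_nonneg: "\<And>j. 0 \<le> L j" and x_pos: "x > 0" and y_nonneg: "y \<ge> 0"
    and total: "(\<Sum>j<m. L j) + x + y = 1" and y_eq_0: "y = 0 \<Longrightarrow> x = 1"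
begin

definition uniform_pairs :: "(nat \<times> nat) set" where
  "uniform_pairs = {(a, b). a < m \<and> b < m \<and> (\<forall>j<m. add_stakes L x y a b j = 1 / real m)}"

lemma uniform_pairs_pos: "uniform_pairs \<noteq> {} \<Longrightarrow> y > 0"
proof (rule ccontr)
  assume "uniform_pairs \<noteq> {}" "\<not> y > 0"
  then obtain a b where "a < m" "add_stakes L x y a b a = 1 / real m"
    by (auto simp: uniform_pairs_def)
  moreover have "y = 0" "x = 1" using \<open>\<not> y > 0\<close> y_nonneg y_eq_0 by auto
  moreover have "1 / real m < 1" using m3 by simp
  ultimately show False using L_nonneg[of a] by (simp add: add_stakes_def)
qed

lemma card_uniform_pairs: "card uniform_pairs \<le> 2"
proof (cases "uniform_pairs = {}")
  case False
  then obtain i j where ij: "(i, j) \<in> uniform_pairs" by auto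
  have swap: "(a, b) = (i, j) \<or> (a, b) = (j, i)" if "(a, b) \<in> uniform_pairs" for a b
  proof -
    from that ij have "a < m" "b < m" "i < m" "j < m"
      "\<forall>l<m. add_stakes L x y a b l = add_stakes L x y i j l"
      by (simp_all add: uniform_pairs_def)
    then show ?thesis
      by (rule add_stakes_eq_imp_swap[OF x_pos uniform_pairs_pos[OF False]])
  qed
  have "uniform_pairs \<subseteq> {(i, j), (j, i)}"
  proof (rule subrelI)
    fix a b assume "(a, b) \<in> uniform_pairs"
    from swap[OF this] show "(a, b) \<in> {(i, j), (j, i)}" by blast
  qed
  then have "card uniform_pairs \<le> card {(i, j), (j, i)}" by (intro card_mono) auto
  also have "\<dots> \<le> 2" by (rule card_insert_le_m1) simp_all
  finally show ?thesis .
qed simp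

definition heavy_pairs :: "(nat \<times> nat) set" where
  "heavy_pairs = {(a, b). a < m \<and> b < m \<and> light_count m (add_stakes L x y a b) + 2 \<le> m}"

text \<open>If some placement of the two stakes balances all colours, then the tail weights
  are exactly \<open>1/m\<close> on every other colour; placing the stakes on two of those
  colours makes both of them heavy.\<close>

lemma card_heavy_pairs:
  assumes "uniform_pairs \<noteq> {}" and "m \<ge> 4"
  shows "card heavy_pairs \<ge> 2"
proof -
  have y_pos: "y > 0" using uniform_pairs_pos assms(1) by simp
  from assms(1) obtain i j where ij: "(i, j) \<in> uniform_pairs" by auto
  have "\<exists>a<3. a \<notin> {i, j}"
    by (rule exists_less_notin) (auto simp: card_insert_if)
  then obtain a where a: "a < 3" "a \<notin> {i, j}" by blast
  have "\<exists>b<4. b \<notin> {i, j, a}"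
    by (rule exists_less_notin) (auto simp: card_insert_if)
  then obtain b where b: "b < 4" "b \<notin> {i, j, a}" by blast
  have ab: "a < m" "b < m" "b \<noteq> a" using a b assms(2) by auto
  have "L a = 1 / real m" "L b = 1 / real m"
    using ij ab a b by (auto simp: uniform_pairs_def add_stakes_def)
  then have heavy: "1 / real m < add_stakes L x y a' b' l"
    if "a' = a \<and> b' = b \<or> a' = b \<and> b' = a" "l = a \<or> l = b" for a' b' l
    using that x_pos y_pos L_nonneg by (auto simp: add_stakes_def)
  have "light_count m (add_stakes L x y a' b') + 2 \<le> m"
    if "a' = a \<and> b' = b \<or> a' = b \<and> b' = a" for a' b'
  proof -
    have "light_count m (add_stakes L x y a' b') \<le> card ({..<m} - {a, b})"
      unfolding light_count_def using heavy[OF that] by (intro card_mono) (auto simp: not_le[symmetric])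
    moreover have "card ({..<m} - {a, b}) = m - 2" using ab by (simp add: card_Diff_subset)
    ultimately show ?thesis using assms(2) by linarith
  qed
  then have "(a, b) \<in> heavy_pairs" "(b, a) \<in> heavy_pairs"
    using ab by (auto simp: heavy_pairs_def)
  moreover have "finite heavy_pairs"
    by (rule finite_subset[of _ "{..<m} \<times> {..<m}"]) (auto simp: heavy_pairs_def)
  ultimately have "card {(a, b), (b, a)} \<le> card heavy_pairs"
    by (intro card_mono) auto
  then show ?thesis using ab(3) by simp
qed

lemma light_count_add_heavy_le:
  assumes "(a, b) \<in> {..<m} \<times> {..<m}"
  shows "light_count m (add_stakes L x y a b) + of_bool ((a, b) \<in> heavy_pairs)
    \<le> m - 1 + of_bool ((a, b) \<in> uniform_pairs)"
proof (cases "(a, b) \<in> uniform_pairs")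
  case True
  then show ?thesis
    using light_count_le[of m "add_stakes L x y a b"] by (auto simp: heavy_pairs_def)
next
  case False
  then obtain j where "j < m" "add_stakes L x y a b j \<noteq> 1 / real m"
    using assms by (auto simp: uniform_pairs_def)
  moreover have "(\<Sum>j<m. add_stakes L x y a b j) = 1"
    using sum_add_stakes[of a m b] assms total by simp
  ultimately have "light_count m (add_stakes L x y a b) < m"
    by (intro light_count_less)
  with False show ?thesis by (auto simp: heavy_pairs_def)
qed

lemma sum_light_count_le:
  "(\<Sum>a<m. \<Sum>b<m. light_count m (add_stakes L x y a b)) \<le> (if m = 3 then 20 else m\<^sup>2 * (m - 1))"
proof -
  let ?P = "{..<m} \<times> {..<m}"
  have subsets: "uniform_pairs \<subseteq> ?P" "heavy_pairs \<subseteq> ?P"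
    by (auto simp: uniform_pairs_def heavy_pairs_def)
  have "(\<Sum>a<m. \<Sum>b<m. light_count m (add_stakes L x y a b)) + card heavy_pairs
      = (\<Sum>(a, b)\<in>?P. light_count m (add_stakes L x y a b) + of_bool ((a, b) \<in> heavy_pairs))"
    using subsets(2) by (simp add: sum.cartesian_product sum.distrib case_prod_beta Int_absorb1)
  also have "\<dots> \<le> (\<Sum>(a, b)\<in>?P. m - 1 + of_bool ((a, b) \<in> uniform_pairs))"
    by (rule sum_mono, clarify) (rule light_count_add_heavy_le, simp)
  also have "\<dots> = m\<^sup>2 * (m - 1) + card uniform_pairs"
    using subsets(1) by (simp add: sum.distrib case_prod_beta Int_absorb1 power2_eq_square)
  finally have bound: "(\<Sum>a<m. \<Sum>b<m. light_count m (add_stakes L x y a b)) + card heavy_pairs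
      \<le> m\<^sup>2 * (m - 1) + card uniform_pairs" .
  show ?thesis
  proof (cases "m = 3")
    case True
    with bound card_uniform_pairs show ?thesis by simp
  next
    case False
    then have "card uniform_pairs \<le> card heavy_pairs"
      using card_heavy_pairs card_uniform_pairs m3 by fastforce
    with bound False show ?thesis by simp
  qed
qed

end

section \<open>Stake sequences\<close>

lemma stake_seq_summable: "stake_seq c \<Longrightarrow> summable c"
  by (auto simp: stake_seq_def sums_iff)

lemma stake_seq_tail_sum:
  assumes "stake_seq c"
  shows "(\<Sum>i. c (Suc (Suc i))) = 1 - c 0 - c 1"
  using suminf_split_initial_segment[OF stake_seq_summable[OF assms], of 2] assms
  by (simp add: stake_seq_def sums_iff numeral_2_eq_2)

lemma stake_seq_second_eq_0:
  assumes "stake_seq c" and "c 1 = 0"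
  shows "c 0 = 1"
proof -
  have "c (Suc (Suc i)) = 0" for i
    using lift_Suc_antimono_le[of c 1 "Suc (Suc i)"] assms by (auto simp: stake_seq_def intro: antisym)
  then show ?thesis using stake_seq_tail_sum[OF assms(1)] assms(2) by simp
qed

lemma stake_seq_first_pos:
  assumes "stake_seq c"
  shows "c 0 > 0"
proof (rule ccontr)
  assume "\<not> c 0 > 0"
  moreover have "c 1 \<le> c 0" "0 \<le> c 1"
    using assms by (auto simp: stake_seq_def)
  ultimately have "c 1 = 0" by simp
  with \<open>\<not> c 0 > 0\<close> show False using stake_seq_second_eq_0[OF assms] by simp
qed

lemma stake_seq_uniform:
  assumes "n > 0"
  shows "stake_seq (\<lambda>i. if i < n then 1 / real n else 0)"
proof -
  have "(\<lambda>i. if i < n then 1 / real n else 0) sums (\<Sum>i<n. if i < n then 1 / real n else 0)"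
    by (rule sums_finite) auto
  then show ?thesis
    using assms unfolding stake_seq_def by auto
qed

lemma summable_mult_of_bool:
  fixes c :: "nat \<Rightarrow> real"
  assumes "\<And>i. 0 \<le> c i" and "summable c"
  shows "summable (\<lambda>i. c i * of_bool (P i))"
  by (rule summable_comparison_test'[OF assms(2), of 0]) (use assms(1) in auto)

section \<open>The colouring coupling\<close>

lemma distr_PiM_map_pmf:
  fixes P :: "'a pmf" and f :: "'a \<Rightarrow> 'b"
  shows "distr (PiM (UNIV :: 'i set) (\<lambda>_. measure_pmf P)) (PiM UNIV (\<lambda>_. measure_pmf (map_pmf f P)))
      (\<lambda>\<sigma> i. f (\<sigma> i)) = PiM UNIV (\<lambda>_. measure_pmf (map_pmf f P))"
    (is "distr ?S ?T ?g = ?T")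
proof -
  interpret P: product_prob_space "\<lambda>_. measure_pmf P" "UNIV :: 'i set"
    by (intro product_prob_spaceI prob_space_measure_pmf)
  interpret Q: product_prob_space "\<lambda>_. measure_pmf (map_pmf f P)" "UNIV :: 'i set"
    by (intro product_prob_spaceI prob_space_measure_pmf)
  have meas: "?g \<in> measurable ?S ?T"
    by (intro measurable_PiM_single' measurable_compose[OF measurable_component_singleton])
      (simp_all add: space_PiM)
  show ?thesis
  proof (rule Q.PiM_eq)
    fix J :: "'i set" and F
    assume J: "finite J" and F: "\<And>j. j \<in> J \<Longrightarrow> F j \<in> sets (measure_pmf (map_pmf f P))"
    let ?X = "prod_emb UNIV (\<lambda>_. measure_pmf (map_pmf f P)) J (\<Pi>\<^sub>E j\<in>J. F j)"
    have "?X \<in> sets ?T"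
      using J F by (intro sets_PiM_I) auto
    then have "emeasure (distr ?S ?T ?g) ?X = emeasure ?S {\<sigma> \<in> space ?S. \<forall>i\<in>J. \<sigma> i \<in> f -` F i}"
      by (simp add: emeasure_distr[OF meas] prod_emb_def space_PiM PiE_iff vimage_def Int_def)
    also have "\<dots> = (\<Prod>i\<in>J. emeasure (measure_pmf P) (f -` F i))"
      using J by (intro P.emeasure_PiM_Collect) auto
    also have "\<dots> = (\<Prod>i\<in>J. emeasure (measure_pmf (map_pmf f P)) (F i))"
      by (simp add: map_pmf_rep_eq emeasure_distr)
    finally show "emeasure (distr ?S ?T ?g) ?X = (\<Prod>i\<in>J. emeasure (measure_pmf (map_pmf f P)) (F i))" .
  qed simp
qed

lemma map_pmf_mod_neq_uniform:
  fixes m j :: nat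
  assumes "j < m"
  shows "map_pmf (\<lambda>x. x mod m \<noteq> j) (pmf_of_set {..<m}) = bernoulli_pmf (1 - 1 / real m)"
proof (rule pmf_eqI)
  fix b :: bool
  have m_pos: "m > 0" using assms by simp
  have "pmf (map_pmf (\<lambda>x. x mod m \<noteq> j) (pmf_of_set {..<m})) b
      = real (card ({..<m} \<inter> {x. (x mod m \<noteq> j) = b})) / real m"
    using m_pos by (subst pmf_map, subst measure_pmf_of_set) (auto simp: vimage_def)
  also have "{..<m} \<inter> {x. (x mod m \<noteq> j) = b} = (if b then {..<m} - {j} else {j})"
    using assms by auto
  finally show "pmf (map_pmf (\<lambda>x. x mod m \<noteq> j) (pmf_of_set {..<m})) b
      = pmf (bernoulli_pmf (1 - 1 / real m)) b"
    using assms m_pos by (cases b) (simp_all add: of_nat_diff field_simps)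
qed

definition colouring_space :: "nat \<Rightarrow> (nat \<Rightarrow> nat) measure" where
  "colouring_space m = PiM UNIV (\<lambda>_. measure_pmf (pmf_of_set {..<m}))"

lemma space_colouring_space [simp]: "space (colouring_space m) = UNIV"
  by (simp add: colouring_space_def space_PiM)

lemma prob_space_colouring_space: "prob_space (colouring_space m)"
  unfolding colouring_space_def by (intro prob_space_PiM prob_space_measure_pmf)

lemma distr_colouring_space_bern_space:
  assumes "j < m"
  shows "distr (colouring_space m) (bern_space (1 - 1 / real m)) (\<lambda>\<sigma> i. \<sigma> i mod m \<noteq> j)
    = bern_space (1 - 1 / real m)"
  using distr_PiM_map_pmf[of "pmf_of_set {..<m}" "\<lambda>x. x mod m \<noteq> j"]
  unfolding colouring_space_def bern_space_def map_pmf_mod_neq_uniform[OF assms] .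

text \<open>Reducing colours \<open>mod m\<close> changes nothing almost surely, but it makes every index carry
  exactly one colour below \<open>m\<close> for every \<open>\<sigma>\<close>, so identities such as \<open>sum_colour_mass\<close>
  hold pointwise.\<close>

definition colour_mass :: "(nat \<Rightarrow> real) \<Rightarrow> nat \<Rightarrow> nat \<Rightarrow> (nat \<Rightarrow> nat) \<Rightarrow> real" where
  "colour_mass c m j \<sigma> = (\<Sum>i. c i * of_bool (\<sigma> i mod m = j))"

lemma borel_measurable_colour_mass [measurable]:
  "colour_mass c m j \<in> borel_measurable (colouring_space m)"
  unfolding colour_mass_def colouring_space_def by measurable

lemma stake_sum_recolour:
  assumes "\<And>i. 0 \<le> c i" and "c sums 1"
  shows "stake_sum c (\<lambda>i. \<sigma> i mod m \<noteq> j) = 1 - colour_mass c m j \<sigma>"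
proof -
  have "summable c" using assms(2) by (simp add: sums_iff)
  then have "(\<lambda>i. c i - c i * of_bool (\<sigma> i mod m = j)) sums (1 - colour_mass c m j \<sigma>)"
    unfolding colour_mass_def
    by (intro sums_diff assms(2) summable_sums summable_mult_of_bool assms(1))
  moreover have "(\<lambda>i. c i * of_bool (\<sigma> i mod m \<noteq> j))
      = (\<lambda>i. c i - c i * of_bool (\<sigma> i mod m = j))"
    by auto
  ultimately show ?thesis
    unfolding stake_sum_def by (simp add: sums_iff)
qed

lemma colour_mass_case_nat:
  assumes "\<And>i. 0 \<le> c i" and "summable c"
  shows "colour_mass c m j (case_nat a \<omega>) = c 0 * of_bool (a mod m = j) + colour_mass (\<lambda>i. c (Suc i)) m j \<omega>"
  using suminf_split_head[OF summable_mult_of_bool[OF assms, of "\<lambda>i. case_nat a \<omega> i mod m = j"]]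
  by (simp add: colour_mass_def)

lemma sum_colour_mass:
  assumes "m > 0" and "\<And>i. 0 \<le> c i" and "summable c"
  shows "(\<Sum>j<m. colour_mass c m j \<sigma>) = suminf c"
proof -
  have one_colour: "(\<Sum>j<m. c i * of_bool (\<sigma> i mod m = j)) = c i" for i
  proof -
    have "{..<m} \<inter> {j. \<sigma> i mod m = j} = {\<sigma> i mod m}" using assms(1) by auto
    then show ?thesis by (simp flip: sum_distrib_left)
  qed
  have "(\<Sum>j<m. colour_mass c m j \<sigma>) = (\<Sum>i. \<Sum>j<m. c i * of_bool (\<sigma> i mod m = j))"
    unfolding colour_mass_def by (rule suminf_sum[symmetric]) (intro summable_mult_of_bool assms(2,3))
  also have "\<dots> = suminf c"
    by (intro suminf_cong one_colour)
  finally show ?thesis .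
qed

lemma success_prob_colouring:
  assumes "stake_seq c" and "j < m"
  shows "success_prob (1 - 1 / real m) c (1 - 1 / real m)
    = measure (colouring_space m) {\<sigma>. colour_mass c m j \<sigma> \<le> 1 / real m}"
proof -
  let ?p = "1 - 1 / real m" and ?Y = "\<lambda>\<sigma> i. \<sigma> i mod m \<noteq> j"
  have Y: "?Y \<in> measurable (colouring_space m) (bern_space ?p)"
    unfolding colouring_space_def bern_space_def
    by (intro measurable_PiM_single' measurable_compose[OF measurable_component_singleton])
      (simp_all add: space_PiM)
  have "{\<omega> \<in> space (bern_space ?p). ?p \<le> stake_sum c \<omega>} \<in> sets (bern_space ?p)"
    unfolding stake_sum_def bern_space_def by measurable
  then have "success_prob ?p c ?p
      = measure (colouring_space m) (?Y -` {\<omega> \<in> space (bern_space ?p). ?p \<le> stake_sum c \<omega>})"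
    unfolding success_prob_def
    by (subst distr_colouring_space_bern_space[OF assms(2), symmetric]) (simp add: measure_distr[OF Y])
  also have "?Y -` {\<omega> \<in> space (bern_space ?p). ?p \<le> stake_sum c \<omega>}
      = {\<sigma>. colour_mass c m j \<sigma> \<le> 1 / real m}"
    using assms(1) measurable_space[OF Y]
    by (auto simp: stake_seq_def stake_sum_recolour)
  finally show ?thesis .
qed

lemma integral_light_count:
  assumes "stake_seq c"
  shows "(\<integral>\<sigma>. real (light_count m (\<lambda>j. colour_mass c m j \<sigma>)) \<partial>colouring_space m)
    = real m * success_prob (1 - 1 / real m) c (1 - 1 / real m)"
proof -
  interpret prob_space "colouring_space m" by (rule prob_space_colouring_space)
  define A where "A j = {\<sigma>. colour_mass c m j \<sigma> \<le> 1 / real m}" for j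
  have "{\<sigma> \<in> space (colouring_space m). colour_mass c m j \<sigma> \<le> 1 / real m} \<in> events" for j
    by measurable
  then have A: "A j \<in> events" for j by (simp add: A_def)
  have "(\<integral>\<sigma>. real (light_count m (\<lambda>j. colour_mass c m j \<sigma>)) \<partial>colouring_space m)
      = (\<integral>\<sigma>. (\<Sum>j<m. indicator (A j) \<sigma>) \<partial>colouring_space m)"
    by (simp add: light_count_eq_sum A_def indicator_def)
  also have "\<dots> = (\<Sum>j<m. prob (A j))"
    using A by (subst Bochner_Integration.integral_sum) (auto simp: less_top[symmetric])
  also have "\<dots> = (\<Sum>j<m. success_prob (1 - 1 / real m) c (1 - 1 / real m))"
    by (intro sum.cong refl) (simp add: A_def success_prob_colouring[OF assms])
  finally show ?thesis by simp
qed

lemma integral_colouring_space_case_nat: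
  fixes g :: "(nat \<Rightarrow> nat) \<Rightarrow> real"
  assumes "m > 0" and g: "g \<in> borel_measurable (colouring_space m)" and "\<And>\<sigma>. \<bar>g \<sigma>\<bar> \<le> K"
  shows "(\<integral>\<sigma>. g \<sigma> \<partial>colouring_space m) = (\<integral>\<omega>. (\<Sum>a<m. g (case_nat a \<omega>)) \<partial>colouring_space m) / real m"
proof -
  let ?U = "measure_pmf (pmf_of_set {..<m})"
  let ?S = "colouring_space m"
  interpret S: sequence_space ?U
    by (intro sequence_space.intro product_prob_spaceI prob_space_measure_pmf)
  interpret P: pair_prob_space ?U ?S
    by (intro pair_prob_space.intro pair_sigma_finite.intro prob_space_imp_sigma_finite
        prob_space_measure_pmf prob_space_colouring_space)
  have case_nat_meas: "(\<lambda>(a, \<omega>). case_nat a \<omega>) \<in> measurable (?U \<Otimes>\<^sub>M ?S) ?S"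
    unfolding colouring_space_def by measurable
  have g_meas: "(\<lambda>\<omega>. g (case_nat a \<omega>)) \<in> borel_measurable ?S" for a
    using g unfolding colouring_space_def by measurable
  have "integrable (?U \<Otimes>\<^sub>M ?S) (\<lambda>(a, \<omega>). g (case_nat a \<omega>))"
    by (rule P.integrable_const_bound[where B = K])
      (use assms(3) measurable_comp[OF case_nat_meas g] in \<open>auto simp: comp_def case_prod_beta\<close>)
  have "(\<integral>\<sigma>. g \<sigma> \<partial>?S) = (\<integral>\<sigma>. g \<sigma> \<partial>distr (?U \<Otimes>\<^sub>M ?S) ?S (\<lambda>(a, \<omega>). case_nat a \<omega>))"
    unfolding colouring_space_def by (simp add: S.PiM_iter)
  also have "\<dots> = (\<integral>(a, \<omega>). g (case_nat a \<omega>) \<partial>(?U \<Otimes>\<^sub>M ?S))"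
    using integral_distr[OF case_nat_meas g] by (simp add: case_prod_unfold)
  also have "\<dots> = (\<integral>\<omega>. (\<integral>a. g (case_nat a \<omega>) \<partial>?U) \<partial>?S)"
    by (rule P.integral_snd[symmetric]) fact
  also have "\<dots> = (\<integral>\<omega>. (\<Sum>a<m. g (case_nat a \<omega>)) / real m \<partial>?S)"
    using assms(1) by (subst integral_pmf_of_set) auto
  finally show ?thesis by simp
qed

lemma integral_colouring_space_case_nat2:
  fixes g :: "(nat \<Rightarrow> nat) \<Rightarrow> real"
  assumes "m > 0" and g: "g \<in> borel_measurable (colouring_space m)" and "\<And>\<sigma>. \<bar>g \<sigma>\<bar> \<le> K"
  shows "(\<integral>\<sigma>. g \<sigma> \<partial>colouring_space m)
    = (\<integral>\<omega>. (\<Sum>b<m. \<Sum>a<m. g (case_nat a (case_nat b \<omega>))) \<partial>colouring_space m) / real m / real m"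
proof -
  have meas: "(\<lambda>\<omega>. \<Sum>a<m. g (case_nat a \<omega>)) \<in> borel_measurable (colouring_space m)"
    using g unfolding colouring_space_def by measurable
  have bounded: "\<bar>\<Sum>a<m. g (case_nat a \<omega>)\<bar> \<le> real m * K" for \<omega>
  proof -
    have "\<bar>\<Sum>a<m. g (case_nat a \<omega>)\<bar> \<le> (\<Sum>a<m. \<bar>g (case_nat a \<omega>)\<bar>)"
      by (rule sum_abs)
    also have "\<dots> \<le> (\<Sum>a<m. K)"
      by (intro sum_mono assms(3))
    finally show ?thesis by simp
  qed
  show ?thesis
    using integral_colouring_space_case_nat[OF assms]
      integral_colouring_space_case_nat[OF assms(1) meas bounded]
    by simp
qed

lemma sum_light_count_case_nat_le:
  assumes c: "stake_seq c" and m: "m \<ge> 3"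
  shows "(\<Sum>b<m. \<Sum>a<m. light_count m (\<lambda>j. colour_mass c m j (case_nat a (case_nat b \<omega>))))
    \<le> (if m = 3 then 20 else m\<^sup>2 * (m - 1))"
proof -
  have c_nonneg: "\<And>i. 0 \<le> c i" using c by (simp add: stake_seq_def)
  have summable: "summable c" "summable (\<lambda>i. c (Suc i))" "summable (\<lambda>i. c (Suc (Suc i)))"
    using stake_seq_summable[OF c] summable_Suc_iff[of c] summable_Suc_iff[of "\<lambda>i. c (Suc i)"]
    by simp_all
  define L where "L j = colour_mass (\<lambda>i. c (Suc (Suc i))) m j \<omega>" for j
  have L_nonneg: "0 \<le> L j" for j
    unfolding L_def colour_mass_def
    by (intro suminf_nonneg summable_mult_of_bool) (simp_all add: c_nonneg summable(3))
  have "(\<Sum>j<m. L j) = 1 - c 0 - c 1"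
    unfolding L_def using m c_nonneg summable(3) stake_seq_tail_sum[OF c]
    by (subst sum_colour_mass) simp_all
  then have total: "(\<Sum>j<m. L j) + c 0 + c 1 = 1" by simp
  have "colour_mass c m j (case_nat a (case_nat b \<omega>)) = add_stakes L (c 0) (c 1) a b j"
    if "a < m" "b < m" for a b j
    using that c_nonneg summable
    by (simp add: colour_mass_case_nat L_def add_stakes_def of_bool_def)
  then have "(\<Sum>b<m. \<Sum>a<m. light_count m (\<lambda>j. colour_mass c m j (case_nat a (case_nat b \<omega>))))
      = (\<Sum>a<m. \<Sum>b<m. light_count m (add_stakes L (c 0) (c 1) a b))"
    by (subst sum.swap) (simp add: fun_eq_iff)
  also have "\<dots> \<le> (if m = 3 then 20 else m\<^sup>2 * (m - 1))"
    by (rule sum_light_count_le[OF m L_nonneg stake_seq_first_pos[OF c] c_nonneg total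
          stake_seq_second_eq_0[OF c]])
  finally show ?thesis .
qed

theorem success_prob_le:
  assumes c: "stake_seq c" and m: "m \<ge> 3"
  shows "success_prob (1 - 1 / real m) c (1 - 1 / real m) \<le> (if m = 3 then 20 / 27 else 1 - 1 / real m)"
proof -
  interpret prob_space "colouring_space m" by (rule prob_space_colouring_space)
  define \<Lambda> where "\<Lambda> \<sigma> = real (light_count m (\<lambda>j. colour_mass c m j \<sigma>))" for \<sigma>
  define B :: real where "B = (if m = 3 then 20 else real m ^ 2 * (real m - 1))"
  have m_pos: "m > 0" using m by simp
  have \<Lambda>_meas: "\<Lambda> \<in> borel_measurable (colouring_space m)"
    unfolding \<Lambda>_def light_count_eq_sum by measurable
  have \<Lambda>_bounded: "\<bar>\<Lambda> \<sigma>\<bar> \<le> real m" for \<sigma>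
    using light_count_le[of m] by (simp add: \<Lambda>_def)
  have double_sum_meas:
    "(\<lambda>\<omega>. \<Sum>b<m. \<Sum>a<m. \<Lambda> (case_nat a (case_nat b \<omega>))) \<in> borel_measurable (colouring_space m)"
    using \<Lambda>_meas unfolding colouring_space_def by measurable
  have double_sum_le: "\<bar>\<Sum>b<m. \<Sum>a<m. \<Lambda> (case_nat a (case_nat b \<omega>))\<bar> \<le> B" for \<omega>
  proof -
    have "(\<Sum>b<m. \<Sum>a<m. \<Lambda> (case_nat a (case_nat b \<omega>)))
        = real (\<Sum>b<m. \<Sum>a<m. light_count m (\<lambda>j. colour_mass c m j (case_nat a (case_nat b \<omega>))))"
      by (simp add: \<Lambda>_def)
    also have "\<dots> \<le> real (if m = 3 then 20 else m\<^sup>2 * (m - 1))"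
      using sum_light_count_case_nat_le[OF c m] by (simp only: of_nat_le_iff)
    also have "\<dots> = B"
      using m by (simp add: B_def of_nat_diff)
    finally show ?thesis by (simp add: \<Lambda>_def abs_of_nonneg sum_nonneg)
  qed
  have "real m * success_prob (1 - 1 / real m) c (1 - 1 / real m) = (\<integral>\<sigma>. \<Lambda> \<sigma> \<partial>colouring_space m)"
    unfolding \<Lambda>_def by (rule integral_light_count[OF c, symmetric])
  also have "\<dots> = (\<integral>\<omega>. (\<Sum>b<m. \<Sum>a<m. \<Lambda> (case_nat a (case_nat b \<omega>))) \<partial>colouring_space m) / real m / real m"
    by (rule integral_colouring_space_case_nat2[OF m_pos \<Lambda>_meas \<Lambda>_bounded])
  also have "\<dots> \<le> B / real m / real m"
    using double_sum_meas double_sum_le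
    by (intro divide_right_mono integral_le_const AE_I2 integrable_const_bound[where B = B])
      (auto intro: abs_le_D1)
  finally have "success_prob (1 - 1 / real m) c (1 - 1 / real m) \<le> B / real m / real m / real m"
    using m_pos by (subst pos_le_divide_eq) (simp_all add: mult.commute)
  also have "B / real m / real m / real m = (if m = 3 then 20 / 27 else 1 - 1 / real m)"
    using m_pos by (simp add: B_def field_simps power2_eq_square)
  finally show ?thesis .
qed

section \<open>The extremal stake sequences\<close>

lemma prob_space_bern_space: "prob_space (bern_space p)"
  unfolding bern_space_def by (intro prob_space_PiM prob_space_measure_pmf)

lemma sets_bern_space_pattern:
  "{\<omega> \<in> space (bern_space p). \<forall>i\<in>J. \<omega> i = b i} \<in> sets (bern_space p)" if "finite J"
  using that unfolding bern_space_def by measurable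

lemma measure_bern_space_pattern:
  assumes "0 \<le> p" "p \<le> 1" and "finite J"
  shows "measure (bern_space p) {\<omega> \<in> space (bern_space p). \<forall>i\<in>J. \<omega> i = b i}
    = (\<Prod>i\<in>J. if b i then p else 1 - p)"
proof -
  interpret product_prob_space "\<lambda>_. measure_pmf (bernoulli_pmf p)" "UNIV :: nat set"
    by (intro product_prob_spaceI prob_space_measure_pmf)
  have "emeasure (bern_space p) {\<omega> \<in> space (bern_space p). \<forall>i\<in>J. \<omega> i \<in> {b i}}
      = (\<Prod>i\<in>J. emeasure (measure_pmf (bernoulli_pmf p)) {b i})"
    unfolding bern_space_def using assms(3) by (intro emeasure_PiM_Collect) auto
  also have "\<dots> = ennreal (\<Prod>i\<in>J. if b i then p else 1 - p)"
  proof -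
    have "pmf (bernoulli_pmf p) x = (if x then p else 1 - p)" for x
      using assms(1,2) by (cases x) simp_all
    then show ?thesis
      using assms(1,2) by (simp add: emeasure_pmf_single prod_ennreal)
  qed
  finally show ?thesis
    using assms(1,2) by (simp add: measure_def prod_nonneg)
qed

lemma stake_sum_finite:
  assumes "\<And>i. n \<le> i \<Longrightarrow> c i = 0"
  shows "stake_sum c \<omega> = (\<Sum>i<n. c i * of_bool (\<omega> i))"
  unfolding stake_sum_def using assms by (subst suminf_finite[of "{..<n}"]) auto

lemma bold_play_gt_half:
  assumes "1 / 2 < t" and "t \<le> 1"
  shows "bold_play t = (\<lambda>i. if i = 0 then 1 else 0)"
proof -
  have "\<lfloor>1 / t\<rfloor> = 1"
    using assms by (simp add: floor_eq_iff field_simps)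
  then show ?thesis
    by (simp add: bold_play_def fun_eq_iff)
qed

lemma success_prob_single_stake:
  assumes "0 \<le> p" "p \<le> 1" and "0 < t" "t \<le> 1"
  shows "success_prob p (\<lambda>i. if i = 0 then 1 else 0) t = p"
proof -
  have "{\<omega> \<in> space (bern_space p). t \<le> stake_sum (\<lambda>i. if i = 0 then 1 else 0) \<omega>}
      = {\<omega> \<in> space (bern_space p). \<forall>i\<in>{0}. \<omega> i = True}"
    using assms(3,4) by (auto simp: stake_sum_finite[of 1])
  moreover have "measure (bern_space p) {\<omega> \<in> space (bern_space p). \<forall>i\<in>{0}. \<omega> i = True} = p"
    using measure_bern_space_pattern[OF assms(1,2), of "{0}" "\<lambda>_. True"] by simp
  ultimately show ?thesis
    by (simp add: success_prob_def)
qed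

lemma success_prob_three_thirds:
  "success_prob (2 / 3) (\<lambda>i. if i < 3 then 1 / 3 else 0) (2 / 3) = 20 / 27"
proof -
  let ?P = "bern_space (2 / 3)"
  interpret prob_space ?P by (rule prob_space_bern_space)
  define E where "E J b = {\<omega> \<in> space ?P. \<forall>i\<in>J. \<omega> i = b i}" for J :: "nat set" and b
  have E: "E J b \<in> events" "measure ?P (E J b) = (\<Prod>i\<in>J. if b i then 2 / 3 else 1 - 2 / 3)"
    if "finite J" for J b
    using that by (simp_all add: E_def sets_bern_space_pattern measure_bern_space_pattern)
  let ?A = "E {0, 1} (\<lambda>_. True)" and ?B = "E {0, 1, 2} (\<lambda>i. i \<noteq> 1)"
    and ?C = "E {0, 1, 2} (\<lambda>i. i \<noteq> 0)"
  have "stake_sum (\<lambda>i. if i < 3 then 1 / 3 else 0) \<omega> = (of_bool (\<omega> 0) + of_bool (\<omega> 1) + of_bool (\<omega> 2)) / 3"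
    for \<omega> :: "nat \<Rightarrow> bool"
    by (subst stake_sum_finite[of 3]) (simp_all add: numeral_3_eq_3 numeral_2_eq_2 add_divide_distrib)
  then have event: "{\<omega> \<in> space ?P. 2 / 3 \<le> stake_sum (\<lambda>i. if i < 3 then 1 / 3 else 0) \<omega>}
      = ?A \<union> ?B \<union> ?C"
    by (auto simp: E_def of_bool_def)
  have "?A \<inter> ?B = {}" "(?A \<union> ?B) \<inter> ?C = {}"
    by (auto simp: E_def)
  then have "measure ?P (?A \<union> ?B \<union> ?C) = measure ?P ?A + measure ?P ?B + measure ?P ?C"
    using E(1) by (simp add: finite_measure_Union)
  then show ?thesis
    unfolding success_prob_def event by (simp add: E(2))
qed

lemma pi_val_eqI:
  assumes "stake_seq c" and "\<And>c'. stake_seq c' \<Longrightarrow> success_prob p c' t \<le> success_prob p c t"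
  shows "pi_val p t = success_prob p c t"
  unfolding pi_val_def using assms by (intro cSup_eq_maximum) auto

lemma pi_val_bold_play:
  assumes "m \<ge> 4"
  defines "p \<equiv> 1 - 1 / real m"
  shows "pi_val p p = success_prob p (bold_play p) p" and "success_prob p (bold_play p) p = p"
proof -
  have p_range: "1 / 2 < p" "p \<le> 1"
    using assms(1) by (simp_all add: p_def field_simps)
  have bold: "bold_play p = (\<lambda>i. if i = 0 then 1 else 0)"
    using p_range by (rule bold_play_gt_half)
  show bold_success: "success_prob p (bold_play p) p = p"
    unfolding bold using p_range by (intro success_prob_single_stake) simp_all
  show "pi_val p p = success_prob p (bold_play p) p"
  proof (rule pi_val_eqI)
    show "stake_seq (bold_play p)"
      using stake_seq_uniform[of 1] by (simp add: bold cong: if_cong)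
    show "success_prob p c p \<le> success_prob p (bold_play p) p" if "stake_seq c" for c
      unfolding bold_success using success_prob_le[OF that, of m] assms(1) by (simp add: p_def)
  qed
qed

lemma pi_val_two_thirds:
  "pi_val (2/3) (2/3) = success_prob (2/3) (\<lambda>i. if i < 3 then 1/3 else 0) (2/3)"
proof (rule pi_val_eqI)
  show "stake_seq (\<lambda>i::nat. if i < 3 then 1/3 else 0)"
    using stake_seq_uniform[of 3] by (simp cong: if_cong)
  show "success_prob (2/3) c (2/3) \<le> success_prob (2/3) (\<lambda>i. if i < 3 then 1/3 else 0) (2/3)"
    if "stake_seq c" for c
    using success_prob_le[OF that, of 3] by (simp add: success_prob_three_thirds)
qed

theorem proposition13:
  fixes k :: nat and p :: real
  assumes "k > 0" and "p = (real k + 1) / (real k + 2)"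
  shows "(k > 1 \<longrightarrow> pi_val p p = success_prob p (bold_play p) p \<and> pi_val p p = p)
       \<and> (k = 1 \<longrightarrow> pi_val (2/3) (2/3) =
             success_prob (2/3) (\<lambda>i. if i < 3 then 1/3 else 0) (2/3))"
proof (intro conjI impI)
  assume "k > 1"
  have "p = 1 - 1 / real (k + 2)"
    using assms(2) by (simp add: field_simps)
  then show "pi_val p p = success_prob p (bold_play p) p" "pi_val p p = p"
    using pi_val_bold_play[of "k + 2"] \<open>k > 1\<close> by simp_all
next
  show "pi_val (2/3) (2/3) = success_prob (2/3) (\<lambda>i. if i < 3 then 1/3 else 0) (2/3)"
    by (rule pi_val_two_thirds)
qed

end
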